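(* Let $C$ be a real $n\times n$ matrix with nonnegative entries. Then there exist real $n\times n$ matrices $A$ and $B$ with $A$ having nonnegative entries such that $C=AB-BA$ if and only if $\operatorname{tr}(C)=0$.
   Context: Real $n\times n$ matrices are ordered entrywise; a matrix is positive ($\geq 0$) if all its entries are nonnegative. $\operatorname{tr}$ denotes the trace. *)

theory Defs
  imports "HOL-Analysis.Analysis"
begin

end

theory Submission
  imports Defs
begin

text \<open>A commutator has trace zero, and for a nonnegative matrix trace zero forces a zero diagonal.
  Conversely, a matrix with zero diagonal is the commutator \<open>D B - B D\<close> of a diagonal matrix
  \<open>D = diag d\<close> with distinct entries, since \<open>(D B - B D)\<^sub>i\<^sub>j = (d\<^sub>i - d\<^sub>j) B\<^sub>i\<^sub>j\<close>; choosing the \<open>d\<^sub>i\<close>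
  distinct natural numbers makes \<open>D\<close> nonnegative.\<close>

definition diag_mat :: "('n \<Rightarrow> 'a::zero) \<Rightarrow> 'a^'n^'n"
  where "diag_mat d = (\<chi> i j. if i = j then d i else 0)"

lemma diag_mat_mult_nth:
  fixes B :: "'a::semiring_1^'m^'n"
  shows "(diag_mat d ** B) $ i $ j = d i * B $ i $ j"
proof -
  have "(diag_mat d ** B) $ i $ j = (\<Sum>k\<in>UNIV. if k = i then d i * B $ i $ j else 0)"
    unfolding matrix_matrix_mult_def vec_lambda_beta by (rule sum.cong) (auto simp: diag_mat_def)
  then show ?thesis by simp
qed

lemma mult_diag_mat_nth:
  fixes B :: "'a::semiring_1^'n^'m"
  shows "(B ** diag_mat d) $ i $ j = B $ i $ j * d j"
proof -
  have "(B ** diag_mat d) $ i $ j = (\<Sum>k\<in>UNIV. if k = j then B $ i $ j * d j else 0)"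
    unfolding matrix_matrix_mult_def vec_lambda_beta by (rule sum.cong) (auto simp: diag_mat_def)
  then show ?thesis by simp
qed

lemma trace_commutator:
  fixes A B :: "'a::comm_ring_1^'n^'n"
  shows "trace (A ** B - B ** A) = 0"
  by (simp add: trace_sub trace_mul_sym[of A B])

lemma diagonal_zero_if_trace_zero_nonneg:
  fixes C :: "'a::linordered_semidom^'n^'n"
  assumes "\<forall>i j. C $ i $ j \<ge> 0" and "trace C = 0"
  shows "C $ i $ i = 0"
  using assms sum_nonneg_eq_0_iff[of UNIV "\<lambda>k. C $ k $ k"] by (simp add: trace_def)

lemma zero_diagonal_eq_commutator_diag_mat:
  fixes C :: "'a::field^'n^'n"
  assumes "inj d" and "\<And>i. C $ i $ i = 0"
  defines "B \<equiv> \<chi> i j. C $ i $ j / (d i - d j)"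
  shows "C = diag_mat d ** B - B ** diag_mat d"
proof (simp only: vec_eq_iff, intro allI)
  fix i j
  have "(diag_mat d ** B - B ** diag_mat d) $ i $ j = d i * B $ i $ j - B $ i $ j * d j"
    by (simp only: vector_minus_component diag_mat_mult_nth mult_diag_mat_nth)
  also have "\<dots> = (d i - d j) * (C $ i $ j / (d i - d j))"
    by (simp only: B_def vec_lambda_beta left_diff_distrib mult.commute)
  also have "\<dots> = C $ i $ j"
    using assms(1,2) by (cases "i = j") (auto dest: injD)
  finally show "C $ i $ j = (diag_mat d ** B - B ** diag_mat d) $ i $ j" by simp
qed

lemma zero_diagonal_eq_commutator_nonneg:
  fixes C :: "real^'n^'n"
  assumes "\<And>i. C $ i $ i = 0"
  obtains A B :: "real^'n^'n" where "\<forall>i j. A $ i $ j \<ge> 0" and "C = A ** B - B ** A"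
proof -
  obtain f :: "'n \<Rightarrow> nat" where "inj f"
    using finite_imp_inj_to_nat_seg[of "UNIV :: 'n set"] by auto
  then have "inj (real \<circ> f)"
    by (simp add: inj_compose)
  from zero_diagonal_eq_commutator_diag_mat[OF this assms] that[of "diag_mat (real \<circ> f)"]
  show thesis
    by (simp add: diag_mat_def)
qed

theorem proposition4p3:
  fixes C :: "real^'n^'n"
  assumes "\<forall>i j. C $ i $ j \<ge> 0"
  shows "(\<exists>A B :: real^'n^'n. (\<forall>i j. A $ i $ j \<ge> 0) \<and> C = A ** B - B ** A)
         \<longleftrightarrow> trace C = 0"
proof
  assume "\<exists>A B :: real^'n^'n. (\<forall>i j. A $ i $ j \<ge> 0) \<and> C = A ** B - B ** A"
  then show "trace C = 0"
    using trace_commutator by blast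
next
  assume "trace C = 0"
  then have "\<And>i. C $ i $ i = 0"
    using assms diagonal_zero_if_trace_zero_nonneg by blast
  then show "\<exists>A B :: real^'n^'n. (\<forall>i j. A $ i $ j \<ge> 0) \<and> C = A ** B - B ** A"
    by (metis zero_diagonal_eq_commutator_nonneg)
qed

end
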